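(* For an $(\infty,\infty)$-category $\mathcal C$, the following are equivalent: (i) $\mathcal C$ is Noetherian; (ii) $\mathcal C$ is locally Noetherian, i.e. $\mathrm{Hom}_{\mathcal C}(x,y)$ is Noetherian for all objects $x,y$; (iii) $\mathcal C$ has small rank, i.e. $\operatorname{rank}\mathcal C<\theta$ for some ordinal $\theta$; (iv) $\mathcal C$ locally has small rank, i.e. $\mathrm{Hom}_{\mathcal C}(x,y)$ has small rank for all objects $x,y$.
   Context: A parallel morphism tower $(\vec\alpha,\vec\beta)$ in an $(\infty,\infty)$-category $\mathcal C$ is a countable sequence of pairs $(\alpha_0,\beta_0),(\alpha_1,\beta_1),\dots$ where $\alpha_0,\beta_0$ are objects of $\mathcal C$ and, for each $n\ge0$, $\alpha_{n+1},\beta_{n+1}$ are parallel $(n+1)$-morphisms $\alpha_n\to\beta_n$. $\mathcal C$ is Noetherian if for every parallel morphism tower there exists $N$ with $\mathrm{Hom}_{\mathcal C}(\alpha_N,\beta_N)\simeq *$. Rank is defined by transfinite induction: $\operatorname{rank}\mathcal C<0$ iff $\mathcal C\simeq *$; $\operatorname{rank}\mathcal C<\theta+1$ iff $\operatorname{rank}\mathrm{Hom}_{\mathcal C}(x,y)<\theta$ for all objects $x,y$; for a limit ordinal $\mu$, $\operatorname{rank}\mathcal C<\mu$ iff $\operatorname{rank}\mathcal C<\theta$ for some $\theta<\mu$. Ordinals here are small ordinals. *)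

theory Defs
  imports Main
begin

text \<open>Abstract (coinductive) presentation of an (infinity,infinity)-category:
  a set of objects, for each pair of objects a hom (infinity,infinity)-category,
  and the predicate "is equivalent to the terminal category *".\<close>

codatatype 'a icat = ICat (Obj: "'a set") (Hom: "'a \<Rightarrow> 'a \<Rightarrow> 'a icat") (Contr: bool)

coinductive valid_cat :: "'a icat \<Rightarrow> bool" where
  "\<lbrakk> Contr C \<longrightarrow> (\<forall>x\<in>Obj C. \<forall>y\<in>Obj C. Contr (Hom C x y));
     \<forall>x\<in>Obj C. \<forall>y\<in>Obj C. valid_cat (Hom C x y) \<rbrakk> \<Longrightarrow> valid_cat C"

primrec tower_cat :: "'a icat \<Rightarrow> (nat \<Rightarrow> 'a) \<Rightarrow> (nat \<Rightarrow> 'a) \<Rightarrow> nat \<Rightarrow> 'a icat" where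
  "tower_cat C a b 0 = C"
| "tower_cat C a b (Suc n) = Hom (tower_cat C a b n) (a n) (b n)"

definition is_tower :: "'a icat \<Rightarrow> (nat \<Rightarrow> 'a) \<Rightarrow> (nat \<Rightarrow> 'a) \<Rightarrow> bool" where
  "is_tower C a b \<longleftrightarrow> (\<forall>n. a n \<in> Obj (tower_cat C a b n) \<and> b n \<in> Obj (tower_cat C a b n))"

definition noetherian :: "'a icat \<Rightarrow> bool" where
  "noetherian C \<longleftrightarrow> (\<forall>a b. is_tower C a b \<longrightarrow>
      (\<exists>N. Contr (Hom (tower_cat C a b N) (a N) (b N))))"

definition locally_noetherian :: "'a icat \<Rightarrow> bool" where
  "locally_noetherian C \<longleftrightarrow> (\<forall>x\<in>Obj C. \<forall>y\<in>Obj C. noetherian (Hom C x y))"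

text \<open>Rank, by transfinite recursion on the ordinal \<theta> (elements of a well-ordered type 'o):
  rank C < \<theta> for \<theta> = 0 iff C is equivalent to *;
  for \<theta> = \<eta>+1 iff all homs have rank < \<eta>;
  for \<theta> a limit iff rank C < \<eta> for some \<eta> < \<theta>.\<close>

definition rank_lt_step ::
  "('o::wellorder \<Rightarrow> 'a icat \<Rightarrow> bool) \<Rightarrow> 'o \<Rightarrow> 'a icat \<Rightarrow> bool" where
  "rank_lt_step R \<theta> C =
    (if (\<forall>\<eta>. \<not> \<eta> < \<theta>) then Contr C
     else if (\<exists>\<eta><\<theta>. \<forall>\<xi>. \<not> (\<eta> < \<xi> \<and> \<xi> < \<theta>))
       then (\<forall>x\<in>Obj C. \<forall>y\<in>Obj C.
               R (THE \<eta>. \<eta> < \<theta> \<and> (\<forall>\<xi>. \<not> (\<eta> < \<xi> \<and> \<xi> < \<theta>))) (Hom C x y))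
     else (\<exists>\<eta><\<theta>. R \<eta> C))"

definition rank_lt :: "'a icat \<Rightarrow> 'o::wellorder \<Rightarrow> bool" where
  "rank_lt C \<theta> = wfrec {(x, y). x < y} rank_lt_step \<theta> C"

end

theory Submission
  imports Defs
begin

text \<open>Noetherianity passes between a category and its hom-categories by shifting towers one
  step, and a category equivalent to \<open>*\<close> is Noetherian because its homs are again equivalent
  to \<open>*\<close>; so a rank bound yields Noetherianity by induction on the ordinal. Conversely, if every
  hom of \<open>C\<close> has small rank then, the ordinals being small, one common bound \<open>\<theta>\<close> exists and
  \<open>rank C < \<theta> + 1\<close>. Hence a category without small rank has a hom without small rank, and
  choosing such homs repeatedly builds a tower that never becomes equivalent to \<open>*\<close>.\<close>

lemma valid_cat_Hom: "valid_cat C \<Longrightarrow> x \<in> Obj C \<Longrightarrow> y \<in> Obj C \<Longrightarrow> valid_cat (Hom C x y)"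
  by (erule valid_cat.cases) auto

lemma valid_cat_Contr_Hom:
  "valid_cat C \<Longrightarrow> Contr C \<Longrightarrow> x \<in> Obj C \<Longrightarrow> y \<in> Obj C \<Longrightarrow> Contr (Hom C x y)"
  by (erule valid_cat.cases) auto

lemma ordinal_cases:
  fixes \<theta> :: "'o::wellorder"
  obtains (zero) "\<forall>\<eta>. \<not> \<eta> < \<theta>"
  | (succ) \<eta> where "\<eta> < \<theta>" "\<forall>\<xi>. \<not> (\<eta> < \<xi> \<and> \<xi> < \<theta>)"
  | (limit) "\<not> (\<forall>\<eta>. \<not> \<eta> < \<theta>)" "\<not> (\<exists>\<eta><\<theta>. \<forall>\<xi>. \<not> (\<eta> < \<xi> \<and> \<xi> < \<theta>))"
  by blast

lemma The_immediate_predecessor: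
  assumes "\<eta> < (\<theta>::'o::wellorder)" "\<forall>\<xi>. \<not> (\<eta> < \<xi> \<and> \<xi> < \<theta>)"
  shows "(THE \<eta>. \<eta> < \<theta> \<and> (\<forall>\<xi>. \<not> (\<eta> < \<xi> \<and> \<xi> < \<theta>))) = \<eta>"
  using assms by (intro the_equality) (auto, meson linorder_neqE)

lemma exists_immediate_successor:
  assumes "\<eta> < (\<theta>::'o::wellorder)"
  shows "\<exists>\<sigma>. \<eta> < \<sigma> \<and> (\<forall>\<xi>. \<not> (\<eta> < \<xi> \<and> \<xi> < \<sigma>))"
proof (intro exI conjI allI notI)
  show "\<eta> < (LEAST \<sigma>. \<eta> < \<sigma>)"
    using assms by (rule LeastI)
  show False if "\<eta> < \<xi> \<and> \<xi> < (LEAST \<sigma>. \<eta> < \<sigma>)" for \<xi>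
    using that not_less_Least by blast
qed

lemma rank_lt_unfold:
  "rank_lt C (\<theta>::'o::wellorder) =
     rank_lt_step (\<lambda>\<eta>. if \<eta> < \<theta> then (\<lambda>D. rank_lt D \<eta>) else undefined) \<theta> C"
proof -
  have "cut (wfrec {(x, y::'o). x < y} rank_lt_step) {(x, y). x < y} \<theta>
      = (\<lambda>\<eta>. if \<eta> < \<theta> then (\<lambda>D::'a icat. rank_lt D \<eta>) else undefined)"
    by (auto simp: cut_def rank_lt_def fun_eq_iff)
  then show ?thesis
    unfolding rank_lt_def by (subst wfrec[OF wellorder_class.wf]) simp
qed

lemma rank_lt_zero:
  assumes "\<forall>\<eta>. \<not> \<eta> < (\<theta>::'o::wellorder)"
  shows "rank_lt C \<theta> = Contr C"
  using assms by (subst rank_lt_unfold) (simp add: rank_lt_step_def)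

lemma rank_lt_succ:
  assumes "\<eta> < (\<theta>::'o::wellorder)" "\<forall>\<xi>. \<not> (\<eta> < \<xi> \<and> \<xi> < \<theta>)"
  shows "rank_lt C \<theta> = (\<forall>x\<in>Obj C. \<forall>y\<in>Obj C. rank_lt (Hom C x y) \<eta>)"
proof -
  have not_zero: "\<not> (\<forall>\<eta>. \<not> \<eta> < \<theta>)"
    and succ: "\<exists>\<eta><\<theta>. \<forall>\<xi>. \<not> (\<eta> < \<xi> \<and> \<xi> < \<theta>)"
    using assms by blast+
  show ?thesis
    apply (subst rank_lt_unfold)
    unfolding rank_lt_step_def if_not_P[OF not_zero] if_P[OF succ] The_immediate_predecessor[OF assms]
    using assms(1) by simp
qed

lemma rank_lt_limit:
  assumes "\<not> (\<forall>\<eta>. \<not> \<eta> < (\<theta>::'o::wellorder))"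
    and "\<not> (\<exists>\<eta><\<theta>. \<forall>\<xi>. \<not> (\<eta> < \<xi> \<and> \<xi> < \<theta>))"
  shows "rank_lt C \<theta> = (\<exists>\<eta><\<theta>. rank_lt C \<eta>)"
  using assms by (subst rank_lt_unfold) (auto simp: rank_lt_step_def)

lemma rank_lt_if_Contr:
  fixes \<theta> :: "'o::wellorder"
  shows "valid_cat C \<Longrightarrow> Contr C \<Longrightarrow> rank_lt C \<theta>"
proof (induction \<theta> arbitrary: C rule: less_induct)
  case (less \<theta>)
  show ?case
  proof (cases \<theta> rule: ordinal_cases)
    case zero
    then show ?thesis using less.prems by (simp add: rank_lt_zero)
  next
    case (succ \<eta>)
    have "rank_lt (Hom C x y) \<eta>" if "x \<in> Obj C" "y \<in> Obj C" for x y
      using less.IH[OF succ(1) valid_cat_Hom valid_cat_Contr_Hom] less.prems that by blast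
    then show ?thesis using succ by (simp add: rank_lt_succ)
  next
    case limit
    then obtain \<eta> where "\<eta> < \<theta>" by blast
    then show ?thesis using less limit by (auto simp: rank_lt_limit)
  qed
qed

lemma rank_lt_Hom:
  fixes \<theta> :: "'o::wellorder"
  shows "rank_lt C \<theta> \<Longrightarrow> Contr C \<or> (\<forall>x\<in>Obj C. \<forall>y\<in>Obj C. \<exists>\<zeta><\<theta>. rank_lt (Hom C x y) \<zeta>)"
proof (induction \<theta> arbitrary: C rule: less_induct)
  case (less \<theta>)
  show ?case
  proof (cases \<theta> rule: ordinal_cases)
    case zero
    then show ?thesis using less.prems by (simp add: rank_lt_zero)
  next
    case (succ \<eta>)
    then show ?thesis using less.prems by (auto simp: rank_lt_succ)
  next
    case limit
    then obtain \<eta> where "\<eta> < \<theta>" "rank_lt C \<eta>"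
      using less.prems by (auto simp: rank_lt_limit)
    then show ?thesis using less.IH by (meson order.strict_trans)
  qed
qed

lemma rank_lt_mono:
  fixes \<theta>' :: "'o::wellorder"
  shows "valid_cat C \<Longrightarrow> \<theta> \<le> \<theta>' \<Longrightarrow> rank_lt C \<theta> \<Longrightarrow> rank_lt C \<theta>'"
proof (induction \<theta>' arbitrary: C \<theta> rule: less_induct)
  case (less \<theta>')
  show ?case
  proof (cases "\<theta> = \<theta>'")
    case False
    with less.prems(2) have "\<theta> < \<theta>'" by simp
    show ?thesis
    proof (cases \<theta>' rule: ordinal_cases)
      case zero
      with \<open>\<theta> < \<theta>'\<close> show ?thesis by blast
    next
      case limit
      with \<open>\<theta> < \<theta>'\<close> less.prems(3) show ?thesis by (auto simp: rank_lt_limit)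
    next
      case (succ \<eta>')
      with \<open>\<theta> < \<theta>'\<close> have "\<theta> \<le> \<eta>'" using not_le by blast
      have "rank_lt (Hom C x y) \<eta>'" if xy: "x \<in> Obj C" "y \<in> Obj C" for x y
        using rank_lt_Hom[OF less.prems(3)]
      proof
        assume "Contr C"
        then show ?thesis
          by (rule rank_lt_if_Contr[OF valid_cat_Hom[OF less.prems(1) xy]
                valid_cat_Contr_Hom[OF less.prems(1) _ xy]])
      next
        assume "\<forall>x\<in>Obj C. \<forall>y\<in>Obj C. \<exists>\<zeta><\<theta>. rank_lt (Hom C x y) \<zeta>"
        then obtain \<zeta> where "\<zeta> < \<theta>" and \<zeta>: "rank_lt (Hom C x y) \<zeta>" using xy by blast
        with \<open>\<theta> \<le> \<eta>'\<close> have "\<zeta> \<le> \<eta>'" by simp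
        then show ?thesis
          by (rule less.IH[OF succ(1) valid_cat_Hom[OF less.prems(1) xy] _ \<zeta>])
      qed
      then show ?thesis using succ by (simp add: rank_lt_succ)
    qed
  qed (use less.prems in simp)
qed

lemma has_rank_if_Hom_has_rank:
  fixes C :: "'a icat"
  assumes "valid_cat C"
    and small_ordinals: "\<forall>f :: 'a \<Rightarrow> 'a \<Rightarrow> 'o::wellorder. \<exists>\<theta>. \<forall>x y. f x y < \<theta>"
    and Hom_rank: "\<forall>x\<in>Obj C. \<forall>y\<in>Obj C. \<exists>\<theta>::'o. rank_lt (Hom C x y) \<theta>"
  shows "\<exists>\<theta>::'o. rank_lt C \<theta>"
proof -
  define f where "f x y = (SOME \<theta>::'o. rank_lt (Hom C x y) \<theta>)" for x y
  obtain \<theta> where bound: "\<forall>x y. f x y < \<theta>"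
    using small_ordinals by blast
  obtain \<theta>' where "\<theta> < \<theta>'"
    using small_ordinals[rule_format, of "\<lambda>_ _. \<theta>"] by blast
  then obtain \<sigma> where \<sigma>: "\<theta> < \<sigma>" "\<forall>\<xi>. \<not> (\<theta> < \<xi> \<and> \<xi> < \<sigma>)"
    using exists_immediate_successor by blast
  have "rank_lt (Hom C x y) \<theta>" if xy: "x \<in> Obj C" "y \<in> Obj C" for x y
  proof (rule rank_lt_mono[OF valid_cat_Hom[OF assms(1) xy]])
    show "f x y \<le> \<theta>" using bound less_imp_le by blast
    show "rank_lt (Hom C x y) (f x y)"
      unfolding f_def using Hom_rank xy by (blast intro: someI_ex)
  qed
  then show ?thesis using rank_lt_succ[OF \<sigma>] by blast
qed

lemma tower_cat_Suc':
  "tower_cat C a b (Suc n) = tower_cat (Hom C (a 0) (b 0)) (a \<circ> Suc) (b \<circ> Suc) n"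
  by (induction n) auto

lemma is_tower_iff:
  "is_tower C a b \<longleftrightarrow>
     a 0 \<in> Obj C \<and> b 0 \<in> Obj C \<and> is_tower (Hom C (a 0) (b 0)) (a \<circ> Suc) (b \<circ> Suc)"
  unfolding is_tower_def tower_cat_Suc'[symmetric] by (metis comp_apply not0_implies_Suc tower_cat.simps(1))

lemma exists_tower_within:
  assumes "P C"
    and step: "\<And>D. P D \<Longrightarrow> \<exists>x\<in>Obj D. \<exists>y\<in>Obj D. P (Hom D x y)"
  obtains a b where "is_tower C a b" "\<And>n. P (tower_cat C a b n)"
proof -
  obtain f g where fg: "\<And>D. P D \<Longrightarrow> f D \<in> Obj D \<and> g D \<in> Obj D \<and> P (Hom D (f D) (g D))"
    using step by metis
  define cats where "cats = rec_nat C (\<lambda>_ D. Hom D (f D) (g D))"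
  have P_cats: "P (cats n)" for n
    by (induction n) (simp_all add: cats_def assms(1) fg)
  have "tower_cat C (f \<circ> cats) (g \<circ> cats) n = cats n" for n
    by (induction n) (simp_all add: cats_def)
  then show ?thesis
    using that[of "f \<circ> cats" "g \<circ> cats"] fg P_cats by (simp add: is_tower_def)
qed

lemma noetherian_if_Contr:
  assumes "valid_cat C" "Contr C"
  shows "noetherian C"
  unfolding noetherian_def
proof (intro allI impI exI)
  fix a b assume "is_tower C a b"
  then have "a 0 \<in> Obj C" "b 0 \<in> Obj C"
    using is_tower_iff by blast+
  then show "Contr (Hom (tower_cat C a b 0) (a 0) (b 0))"
    using assms by (simp add: valid_cat_Contr_Hom)
qed

lemma noetherian_iff_locally_noetherian:
  assumes "valid_cat C"
  shows "noetherian C \<longleftrightarrow> locally_noetherian C"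
proof
  assume "locally_noetherian C"
  show "noetherian C"
    unfolding noetherian_def
  proof (intro allI impI)
    fix a b assume "is_tower C a b"
    then have "a 0 \<in> Obj C" "b 0 \<in> Obj C"
      and shifted: "is_tower (Hom C (a 0) (b 0)) (a \<circ> Suc) (b \<circ> Suc)"
      using is_tower_iff by blast+
    then have "noetherian (Hom C (a 0) (b 0))"
      using \<open>locally_noetherian C\<close> unfolding locally_noetherian_def by blast
    then obtain N where "Contr (Hom (tower_cat (Hom C (a 0) (b 0)) (a \<circ> Suc) (b \<circ> Suc) N)
                                  ((a \<circ> Suc) N) ((b \<circ> Suc) N))"
      using shifted unfolding noetherian_def by blast
    then have "Contr (Hom (tower_cat C a b (Suc N)) (a (Suc N)) (b (Suc N)))"
      by (simp only: tower_cat_Suc' comp_apply)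
    then show "\<exists>N. Contr (Hom (tower_cat C a b N) (a N) (b N))" by blast
  qed
next
  assume "noetherian C"
  show "locally_noetherian C"
    unfolding locally_noetherian_def noetherian_def
  proof (intro ballI allI impI)
    fix x y a b
    assume xy: "x \<in> Obj C" "y \<in> Obj C" and tower: "is_tower (Hom C x y) a b"
    let ?a = "case_nat x a" and ?b = "case_nat y b"
    have shift: "?a \<circ> Suc = a" "?b \<circ> Suc = b" by auto
    have "is_tower C ?a ?b"
      unfolding is_tower_iff[of C ?a ?b] shift using xy tower by simp
    then obtain N where N: "Contr (Hom (tower_cat C ?a ?b N) (?a N) (?b N))"
      using \<open>noetherian C\<close> unfolding noetherian_def by blast
    show "\<exists>N. Contr (Hom (tower_cat (Hom C x y) a b N) (a N) (b N))"
    proof (cases N)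
      case 0
      \<comment> \<open>The tower only says \<open>Hom C x y \<simeq> *\<close>; validity passes this on to its homs.\<close>
      with N have "Contr (Hom C x y)" by simp
      moreover have "a 0 \<in> Obj (Hom C x y)" "b 0 \<in> Obj (Hom C x y)"
        using tower is_tower_iff by blast+
      ultimately have "Contr (Hom (Hom C x y) (a 0) (b 0))"
        by (rule valid_cat_Contr_Hom[OF valid_cat_Hom[OF assms xy]])
      then show ?thesis by (intro exI[of _ 0]) simp
    next
      case (Suc M)
      from N[unfolded Suc tower_cat_Suc' shift] show ?thesis by (intro exI[of _ M]) simp
    qed
  qed
qed

lemma noetherian_if_rank_lt:
  fixes \<theta> :: "'o::wellorder"
  shows "valid_cat C \<Longrightarrow> rank_lt C \<theta> \<Longrightarrow> noetherian C"
proof (induction \<theta> arbitrary: C rule: less_induct)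
  case (less \<theta>)
  from rank_lt_Hom[OF less.prems(2)] show ?case
  proof
    assume "Contr C"
    with less.prems(1) show ?thesis by (rule noetherian_if_Contr)
  next
    assume Hom_rank: "\<forall>x\<in>Obj C. \<forall>y\<in>Obj C. \<exists>\<zeta><\<theta>. rank_lt (Hom C x y) \<zeta>"
    have "noetherian (Hom C x y)" if xy: "x \<in> Obj C" "y \<in> Obj C" for x y
    proof -
      obtain \<zeta> where "\<zeta> < \<theta>" "rank_lt (Hom C x y) \<zeta>"
        using Hom_rank xy by blast
      then show ?thesis by (rule less.IH[OF _ valid_cat_Hom[OF less.prems(1) xy]])
    qed
    then show ?thesis
      using noetherian_iff_locally_noetherian[OF less.prems(1)]
      unfolding locally_noetherian_def by blast
  qed
qed

lemma has_rank_if_noetherian: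
  fixes C :: "'a icat"
  assumes "valid_cat C" "noetherian C"
    and small_ordinals: "\<forall>f :: 'a \<Rightarrow> 'a \<Rightarrow> 'o::wellorder. \<exists>\<theta>. \<forall>x y. f x y < \<theta>"
  shows "\<exists>\<theta>::'o. rank_lt C \<theta>"
proof (rule ccontr)
  define P where "P D \<longleftrightarrow> valid_cat D \<and> \<not> (\<exists>\<theta>::'o. rank_lt D \<theta>)" for D :: "'a icat"
  assume "\<not> (\<exists>\<theta>::'o. rank_lt C \<theta>)"
  with assms(1) have "P C" by (simp add: P_def)
  have step: "\<exists>x\<in>Obj D. \<exists>y\<in>Obj D. P (Hom D x y)" if "P D" for D
  proof -
    from that have D: "valid_cat D" "\<not> (\<exists>\<theta>::'o. rank_lt D \<theta>)"
      unfolding P_def by auto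
    then obtain x y where xy: "x \<in> Obj D" "y \<in> Obj D" "\<not> (\<exists>\<theta>::'o. rank_lt (Hom D x y) \<theta>)"
      using has_rank_if_Hom_has_rank[OF D(1) small_ordinals] by blast
    then show ?thesis
      using valid_cat_Hom[OF D(1) xy(1,2)] unfolding P_def by blast
  qed
  obtain a b where tower: "is_tower C a b" and P: "\<And>n. P (tower_cat C a b n)"
    using exists_tower_within[OF \<open>P C\<close> step] by blast
  obtain N where "Contr (Hom (tower_cat C a b N) (a N) (b N))"
    using \<open>noetherian C\<close> tower unfolding noetherian_def by blast
  then have "Contr (tower_cat C a b (Suc N))" by simp
  moreover have "valid_cat (tower_cat C a b (Suc N))"
    using P unfolding P_def by blast
  ultimately have "\<exists>\<theta>::'o. rank_lt (tower_cat C a b (Suc N)) \<theta>"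
    by (intro exI rank_lt_if_Contr)
  with P show False unfolding P_def by blast
qed

theorem lemma3p5:
  fixes C :: "'a icat"
  assumes "valid_cat C"
    and small_ordinals: "\<forall>f :: 'a \<Rightarrow> 'a \<Rightarrow> 'o::wellorder. \<exists>\<theta>. \<forall>x y. f x y < \<theta>"
  shows "(noetherian C \<longleftrightarrow> locally_noetherian C)
       \<and> (noetherian C \<longleftrightarrow> (\<exists>\<theta>::'o. rank_lt C \<theta>))
       \<and> (noetherian C \<longleftrightarrow> (\<forall>x\<in>Obj C. \<forall>y\<in>Obj C. \<exists>\<theta>::'o. rank_lt (Hom C x y) \<theta>))"
proof -
  have noetherian_iff_rank: "noetherian D \<longleftrightarrow> (\<exists>\<theta>::'o. rank_lt D \<theta>)"
    if "valid_cat D" for D :: "'a icat"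
  proof
    assume "noetherian D"
    then show "\<exists>\<theta>::'o. rank_lt D \<theta>" by (rule has_rank_if_noetherian[OF that _ small_ordinals])
  qed (use noetherian_if_rank_lt[OF that] in blast)
  have "locally_noetherian C \<longleftrightarrow> (\<forall>x\<in>Obj C. \<forall>y\<in>Obj C. \<exists>\<theta>::'o. rank_lt (Hom C x y) \<theta>)"
    unfolding locally_noetherian_def
    using noetherian_iff_rank valid_cat_Hom[OF assms(1)] by simp
  then show ?thesis
    using noetherian_iff_locally_noetherian[OF assms(1)] noetherian_iff_rank[OF assms(1)] by simp
qed

end
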